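(* Let $1<S\le N$, $L$ a band-width vector, $\dot W$ an $L$-admissible matrix, $W_\varepsilon=\mathrm{Id}+\varepsilon\dot W$, $k\in\mathbb N$, $\beta\in\Gamma$, $P_{\varepsilon,\beta}=D_{k,\beta,L}W_\varepsilon$ and $\hat P_\beta=D_{k,\beta,L}\hat W_L$. Let $\gamma_0>0$ be such that $P_{\varepsilon,\beta}$ has $N$ distinct eigenvalues $\lambda^{(1)}_\varepsilon,\dots,\lambda^{(N)}_\varepsilon$ for $0<\varepsilon<\gamma_0$, labelled so that each $\varepsilon\mapsto\lambda^{(\ell)}_\varepsilon$ is continuous and $\lambda^{(\ell)}_\varepsilon\to e^{-2\pi ik\beta_s}$ whenever $\ell\in B_s$. Let $\{f^{(1)},\dots,f^{(N)}\}$ be an orthonormal eigenbasis of $\hat P_\beta$ such that for every $\ell$ and any unit eigenvector $g^{(\ell)}_\varepsilon$ of $P_{\varepsilon,\beta}$ for $\lambda^{(\ell)}_\varepsilon$, $\min_{\theta}\|g^{(\ell)}_\varepsilon-e^{i\theta}f^{(\ell)}\|\to0$ as $\varepsilon\to0$. Then there exist $\gamma>0$ and, for each $0<\varepsilon<\gamma$, a unit-norm eigenbasis $f^{(1)}_\varepsilon,\dots,f^{(N)}_\varepsilon$ of $P_{\varepsilon,\beta}$ with $P_{\varepsilon,\beta}f^{(\ell)}_\varepsilon=\lambda^{(\ell)}_\varepsilon f^{(\ell)}_\varepsilon$, such that for every $\ell\in\{1,\dots,N\}$: (i) the map $\varepsilon\in(0,\gamma)\mapsto f^{(\ell)}_\varepsilon\in\mathbb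 C^N$ is $C^\infty$; and (ii) $f^{(\ell)}_\varepsilon\to f^{(\ell)}$ in $\mathbb C^N$ as $\varepsilon\to0$.
   Context: A band-width vector is $L=(L_1,\dots,L_S)$ of positive integers with $\sum_sL_s=N$; $N_0=0$, $N_s=N_{s-1}+L_s$, $B_s=\{j:N_{s-1}<j\le N_s\}$. $D_{k,\beta,L}$ is the diagonal matrix with $j$-th entry $e^{-2\pi ik\beta_s}$ for $j\in B_s$. $\dot W$ is $L$-admissible if it is real symmetric and (1) $\dot W_{ij}\ge0$ for $i\ne j$, $\sum_j\dot W_{ij}=0$ for all $i$; (2) $\dot W$ has $N$ distinct eigenvalues; (3) each $\hat W_s=(\dot W_{jk})_{j,k\in B_s}$ has $L_s$ distinct eigenvalues. $\hat W_L$ is block diagonal with blocks $\hat W_1,\dots,\hat W_S$. $\Gamma=\{\beta\in\mathbb R^S: e^{-2\pi ik\beta_{s_1}}\neq e^{-2\pi ik\beta_{s_2}}\text{ for all }k\ne0,\ s_1\ne s_2\}$. *)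

theory Defs
  imports "HOL-Analysis.Analysis"
begin

text \<open>Conventions: indices are 1-based natural numbers. Vectors in C^N are functions nat => complex, of which
  only the values on {1..N} matter; N x N matrices are functions nat => nat => complex
  of which only the entries on {1..N} x {1..N} matter.\<close>

definition Ncum :: "(nat \<Rightarrow> nat) \<Rightarrow> nat \<Rightarrow> nat" where
  "Ncum L s = (\<Sum>t\<in>{1..s}. L t)"

definition blk :: "(nat \<Rightarrow> nat) \<Rightarrow> nat \<Rightarrow> nat set" where
  "blk L s = {Ncum L (s - 1) <.. Ncum L s}"

definition band_width :: "nat \<Rightarrow> (nat \<Rightarrow> nat) \<Rightarrow> nat \<Rightarrow> bool" where
  "band_width S L N \<longleftrightarrow> S \<ge> 1 \<and> (\<forall>s\<in>{1..S}. L s > 0) \<and> Ncum L S = N"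

definition is_eigvec :: "nat set \<Rightarrow> (nat \<Rightarrow> nat \<Rightarrow> complex) \<Rightarrow> complex \<Rightarrow> (nat \<Rightarrow> complex) \<Rightarrow> bool" where
  "is_eigvec I A \<mu> v \<longleftrightarrow> (\<exists>j\<in>I. v j \<noteq> 0) \<and> (\<forall>i\<in>I. (\<Sum>j\<in>I. A i j * v j) = \<mu> * v i)"

definition eigenvalues_on :: "nat set \<Rightarrow> (nat \<Rightarrow> nat \<Rightarrow> complex) \<Rightarrow> complex set" where
  "eigenvalues_on I A = {\<mu>. \<exists>v. is_eigvec I A \<mu> v}"

definition vnorm :: "nat set \<Rightarrow> (nat \<Rightarrow> complex) \<Rightarrow> real" where
  "vnorm I v = sqrt (\<Sum>j\<in>I. (cmod (v j))\<^sup>2)"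

definition vinner :: "nat set \<Rightarrow> (nat \<Rightarrow> complex) \<Rightarrow> (nat \<Rightarrow> complex) \<Rightarrow> complex" where
  "vinner I v w = (\<Sum>j\<in>I. v j * cnj (w j))"

definition mat_mult :: "nat set \<Rightarrow> (nat \<Rightarrow> nat \<Rightarrow> complex) \<Rightarrow> (nat \<Rightarrow> nat \<Rightarrow> complex) \<Rightarrow> nat \<Rightarrow> nat \<Rightarrow> complex" where
  "mat_mult I A B = (\<lambda>i j. \<Sum>m\<in>I. A i m * B m j)"

definition admissible :: "nat \<Rightarrow> (nat \<Rightarrow> nat) \<Rightarrow> nat \<Rightarrow> (nat \<Rightarrow> nat \<Rightarrow> real) \<Rightarrow> bool" where
  "admissible S L N Wd \<longleftrightarrow>
     (\<forall>i\<in>{1..N}. \<forall>j\<in>{1..N}. Wd i j = Wd j i) \<and>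
     (\<forall>i\<in>{1..N}. \<forall>j\<in>{1..N}. i \<noteq> j \<longrightarrow> Wd i j \<ge> 0) \<and>
     (\<forall>i\<in>{1..N}. (\<Sum>j\<in>{1..N}. Wd i j) = 0) \<and>
     card (eigenvalues_on {1..N} (\<lambda>i j. complex_of_real (Wd i j))) = N \<and>
     (\<forall>s\<in>{1..S}. card (eigenvalues_on (blk L s) (\<lambda>i j. complex_of_real (Wd i j))) = L s)"

definition phase :: "nat \<Rightarrow> (nat \<Rightarrow> real) \<Rightarrow> nat \<Rightarrow> complex" where
  "phase k \<beta> s = exp (- 2 * complex_of_real pi * \<i> * of_nat k * complex_of_real (\<beta> s))"

definition Dmat :: "nat \<Rightarrow> (nat \<Rightarrow> real) \<Rightarrow> nat \<Rightarrow> (nat \<Rightarrow> nat) \<Rightarrow> nat \<Rightarrow> nat \<Rightarrow> complex" where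
  "Dmat k \<beta> S L i j = (if i = j then (\<Sum>s\<in>{1..S}. if j \<in> blk L s then phase k \<beta> s else 0) else 0)"

definition Weps :: "(nat \<Rightarrow> nat \<Rightarrow> real) \<Rightarrow> real \<Rightarrow> nat \<Rightarrow> nat \<Rightarrow> complex" where
  "Weps Wd \<epsilon> i j = (if i = j then 1 else 0) + complex_of_real (\<epsilon> * Wd i j)"

definition What :: "nat \<Rightarrow> (nat \<Rightarrow> nat) \<Rightarrow> (nat \<Rightarrow> nat \<Rightarrow> real) \<Rightarrow> nat \<Rightarrow> nat \<Rightarrow> complex" where
  "What S L Wd i j = (if \<exists>s\<in>{1..S}. i \<in> blk L s \<and> j \<in> blk L s then complex_of_real (Wd i j) else 0)"

definition Gamma_set :: "nat \<Rightarrow> (nat \<Rightarrow> real) set" where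
  "Gamma_set S = {\<beta>. \<forall>k::int. k \<noteq> 0 \<longrightarrow> (\<forall>s1\<in>{1..S}. \<forall>s2\<in>{1..S}. s1 \<noteq> s2 \<longrightarrow>
      exp (- 2 * complex_of_real pi * \<i> * of_int k * complex_of_real (\<beta> s1)) \<noteq>
      exp (- 2 * complex_of_real pi * \<i> * of_int k * complex_of_real (\<beta> s2)))}"

definition smooth_on :: "real set \<Rightarrow> (real \<Rightarrow> complex) \<Rightarrow> bool" where
  "smooth_on U g \<longleftrightarrow> (\<exists>F :: nat \<Rightarrow> real \<Rightarrow> complex. (\<forall>x\<in>U. F 0 x = g x) \<and>
      (\<forall>n. \<forall>x\<in>U. (F n has_vector_derivative F (Suc n) x) (at x)))"

end

(*
  The matrices P_eps = D (Id + eps W) form an affine pencil in eps. Since the N eigenvalues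
  lam_eps^(l) are distinct, each is a simple root of the characteristic polynomial, so by the
  holomorphic implicit function theorem it extends holomorphically to complex eps, and a column of
  the adjugate of (lam - P_eps) is a holomorphic eigenvector spanning the eigenline. Normalising it to
  unit length with the phase that makes its inner product with f^(l) positive gives f_eps^(l); with the
  reflection z |-> conj (v (conj z)) this normalisation is again the restriction of a holomorphic
  function, hence C^infinity on the real axis. The hypothesis on the unit eigenvectors says that the
  eigenlines converge to f^(l) up to phase, so |<f_eps^(l), f^(l)>| -> 1, and for the positively
  aligned unit vector |f_eps^(l) - f^(l)|^2 = 2 - 2 |<f_eps^(l), f^(l)>| -> 0.
*)

theory Submission
  imports Defs "HOL-Complex_Analysis.Complex_Analysis" "Jordan_Normal_Form.Char_Poly"
begin

unbundle no vec_syntax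

section \<open>Real functions with holomorphic extensions\<close>

definition has_holomorphic_extension :: "real set \<Rightarrow> (real \<Rightarrow> complex) \<Rightarrow> bool" where
  "has_holomorphic_extension B g \<longleftrightarrow>
     (\<exists>T h. open T \<and> of_real ` B \<subseteq> T \<and> h holomorphic_on T \<and> (\<forall>x\<in>B. g x = h (of_real x)))"

lemma has_holomorphic_extensionI:
  assumes "open T" "of_real ` B \<subseteq> T" "h holomorphic_on T" "\<And>x. x \<in> B \<Longrightarrow> g x = h (of_real x)"
  shows "has_holomorphic_extension B g"
  using assms unfolding has_holomorphic_extension_def by blast

lemma has_holomorphic_extension_subset:
  "has_holomorphic_extension B g \<Longrightarrow> B' \<subseteq> B \<Longrightarrow> has_holomorphic_extension B' g"
  unfolding has_holomorphic_extension_def by blast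

lemma has_holomorphic_extension_cong:
  "has_holomorphic_extension B g \<Longrightarrow> (\<And>x. x \<in> B \<Longrightarrow> g x = g' x) \<Longrightarrow> has_holomorphic_extension B g'"
  unfolding has_holomorphic_extension_def by metis

lemma has_holomorphic_extension_const: "has_holomorphic_extension B (\<lambda>x. c)"
  by (rule has_holomorphic_extensionI[of UNIV _ "\<lambda>z. c"]) auto

lemma has_holomorphic_extension_common:
  assumes "has_holomorphic_extension B g" "has_holomorphic_extension B g'"
  obtains T h h' where "open T" "of_real ` B \<subseteq> T" "h holomorphic_on T" "h' holomorphic_on T"
    "\<And>x. x \<in> B \<Longrightarrow> g x = h (of_real x)" "\<And>x. x \<in> B \<Longrightarrow> g' x = h' (of_real x)"
proof -
  obtain T h T' h' where "open T" "of_real ` B \<subseteq> T" "h holomorphic_on T" "\<forall>x\<in>B. g x = h (of_real x)"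
    "open T'" "of_real ` B \<subseteq> T'" "h' holomorphic_on T'" "\<forall>x\<in>B. g' x = h' (of_real x)"
    using assms unfolding has_holomorphic_extension_def by metis
  then show ?thesis
    using that[of "T \<inter> T'" h h'] holomorphic_on_subset[of _ _ "T \<inter> T'"] by auto
qed

lemma has_holomorphic_extension_add:
  assumes "has_holomorphic_extension B g" "has_holomorphic_extension B g'"
  shows "has_holomorphic_extension B (\<lambda>x. g x + g' x)"
proof -
  obtain T h h' where "open T" "of_real ` B \<subseteq> T" "h holomorphic_on T" "h' holomorphic_on T"
    "\<And>x. x \<in> B \<Longrightarrow> g x = h (of_real x)" "\<And>x. x \<in> B \<Longrightarrow> g' x = h' (of_real x)"
    using has_holomorphic_extension_common[OF assms] by blast
  then show ?thesis
    by (intro has_holomorphic_extensionI[of T _ "\<lambda>z. h z + h' z"]) (auto intro: holomorphic_intros)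
qed

lemma has_holomorphic_extension_mult:
  assumes "has_holomorphic_extension B g" "has_holomorphic_extension B g'"
  shows "has_holomorphic_extension B (\<lambda>x. g x * g' x)"
proof -
  obtain T h h' where "open T" "of_real ` B \<subseteq> T" "h holomorphic_on T" "h' holomorphic_on T"
    "\<And>x. x \<in> B \<Longrightarrow> g x = h (of_real x)" "\<And>x. x \<in> B \<Longrightarrow> g' x = h' (of_real x)"
    using has_holomorphic_extension_common[OF assms] by blast
  then show ?thesis
    by (intro has_holomorphic_extensionI[of T _ "\<lambda>z. h z * h' z"]) (auto intro: holomorphic_intros)
qed

lemma has_holomorphic_extension_divide:
  assumes "has_holomorphic_extension B g" "has_holomorphic_extension B g'" "\<And>x. x \<in> B \<Longrightarrow> g' x \<noteq> 0"
  shows "has_holomorphic_extension B (\<lambda>x. g x / g' x)"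
proof -
  obtain T h h' where T: "open T" "of_real ` B \<subseteq> T" "h holomorphic_on T" "h' holomorphic_on T"
    and eq: "\<And>x. x \<in> B \<Longrightarrow> g x = h (of_real x)" "\<And>x. x \<in> B \<Longrightarrow> g' x = h' (of_real x)"
    using has_holomorphic_extension_common[OF assms(1,2)] by blast
  define T' where "T' = T \<inter> h' -` (- {0})"
  have "open T'"
    unfolding T'_def using T by (intro continuous_open_preimage holomorphic_on_imp_continuous_on) auto
  moreover have "of_real ` B \<subseteq> T'" using T(2) assms(3) eq(2) by (auto simp: T'_def)
  moreover have "(\<lambda>z. h z / h' z) holomorphic_on T'"
    using holomorphic_on_subset[OF T(3), of T'] holomorphic_on_subset[OF T(4), of T']
    by (intro holomorphic_intros) (auto simp: T'_def)
  ultimately show ?thesis using eq by (intro has_holomorphic_extensionI) auto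
qed

lemma has_holomorphic_extension_sum:
  "(\<And>k. k \<in> K \<Longrightarrow> has_holomorphic_extension B (g k)) \<Longrightarrow>
    has_holomorphic_extension B (\<lambda>x. \<Sum>k\<in>K. g k x)"
  by (induction K rule: infinite_finite_induct)
    (auto intro: has_holomorphic_extension_const has_holomorphic_extension_add)

text \<open>On the real axis the reflection \<open>cnj \<circ> h \<circ> cnj\<close> of an extension \<open>h\<close> of \<open>g\<close> extends \<open>cnj \<circ> g\<close>.\<close>
lemma has_holomorphic_extension_cnj:
  assumes "has_holomorphic_extension B g"
  shows "has_holomorphic_extension B (\<lambda>x. cnj (g x))"
proof -
  obtain T h where T: "open T" "of_real ` B \<subseteq> T" "h holomorphic_on T" "\<forall>x\<in>B. g x = h (of_real x)"
    using assms unfolding has_holomorphic_extension_def by metis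
  have "open (cnj -` T)" using T(1) by (intro open_vimage) (auto intro: continuous_intros)
  moreover have "cnj ` (cnj -` T) = T" by (metis complex_cnj_cnj surj_def surj_image_vimage_eq)
  ultimately have "cnj \<circ> h \<circ> cnj holomorphic_on cnj -` T"
    using T(3) by (intro holomorphic_on_compose_cnj_cnj) auto
  moreover have "of_real ` B \<subseteq> cnj -` T" using T(2) by auto
  ultimately show ?thesis
    using T(4) \<open>open (cnj -` T)\<close> by (intro has_holomorphic_extensionI[of "cnj -` T" _ "cnj \<circ> h \<circ> cnj"]) auto
qed

lemma has_holomorphic_extension_sqrt:
  assumes "has_holomorphic_extension B (\<lambda>x. of_real (r x))" "\<And>x. x \<in> B \<Longrightarrow> r x > 0"
  shows "has_holomorphic_extension B (\<lambda>x. of_real (sqrt (r x)))"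
proof -
  obtain T h where T: "open T" "of_real ` B \<subseteq> T" "h holomorphic_on T" "\<forall>x\<in>B. of_real (r x) = h (of_real x)"
    using assms(1) unfolding has_holomorphic_extension_def by metis
  define T' where "T' = T \<inter> h -` (- \<real>\<^sub>\<le>\<^sub>0)"
  have "open T'" unfolding T'_def
    using T by (intro continuous_open_preimage holomorphic_on_imp_continuous_on) auto
  moreover have "of_real ` B \<subseteq> T'"
  proof
    fix z :: complex assume "z \<in> of_real ` B"
    then obtain x where x: "x \<in> B" "z = of_real x" by blast
    then have "h z = of_real (r x)" using T(4) by simp
    then show "z \<in> T'" using x T(2) assms(2)[OF x(1)] by (auto simp: T'_def complex_nonpos_Reals_iff)
  qed
  moreover have "(\<lambda>z. csqrt (h z)) holomorphic_on T'"
    by (rule holomorphic_on_csqrt'[OF holomorphic_on_subset[OF T(3)]]) (unfold T'_def, blast+)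
  ultimately show ?thesis
  proof (rule has_holomorphic_extensionI)
    fix x assume "x \<in> B"
    then have "h (of_real x) = of_real (r x)" using T(4) by simp
    then show "of_real (sqrt (r x)) = csqrt (h (of_real x))"
      using assms(2)[OF \<open>x \<in> B\<close>] by (simp add: less_imp_le)
  qed
qed

lemma has_holomorphic_extension_norm:
  assumes "has_holomorphic_extension B g" "\<And>x. x \<in> B \<Longrightarrow> g x \<noteq> 0"
  shows "has_holomorphic_extension B (\<lambda>x. of_real (cmod (g x)))"
proof -
  have "has_holomorphic_extension B (\<lambda>x. of_real ((cmod (g x))\<^sup>2))"
    using has_holomorphic_extension_mult[OF assms(1) has_holomorphic_extension_cnj[OF assms(1)]]
    by (rule has_holomorphic_extension_cong) (simp add: complex_norm_square flip: of_real_power)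
  from has_holomorphic_extension_sqrt[OF this] show ?thesis
    using assms(2) by simp
qed

lemma smooth_on_if_has_holomorphic_extension:
  assumes "\<And>x. x \<in> U \<Longrightarrow> \<exists>\<delta>>0. has_holomorphic_extension (ball x \<delta>) g"
  shows "smooth_on U g"
proof -
  define Dn where "Dn n = ((\<lambda>f x. vector_derivative f (at x)) ^^ n) g" for n
  have deriv_along_reals:
    "((\<lambda>t. (deriv ^^ n) h (of_real t)) has_vector_derivative (deriv ^^ Suc n) h (of_real y)) (at y)"
    if "open T" "h holomorphic_on T" "of_real y \<in> T" for n h T y
  proof -
    have "(deriv ^^ n) h holomorphic_on T" using that holomorphic_higher_deriv by blast
    then have "((deriv ^^ n) h has_field_derivative deriv ((deriv ^^ n) h) (of_real y)) (at (of_real y))"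
      using that holomorphic_derivI by blast
    then show ?thesis by (simp add: has_vector_derivative_real_field)
  qed
  have Dn_eq: "\<forall>y\<in>ball x \<delta>. Dn n y = (deriv ^^ n) h (of_real y)"
    if "open T" "of_real ` ball x \<delta> \<subseteq> T" "h holomorphic_on T" "\<forall>y\<in>ball x \<delta>. g y = h (of_real y)"
    for x \<delta> T h n
  proof (induction n)
    case 0
    then show ?case using that by (simp add: Dn_def)
  next
    case (Suc n)
    show ?case
    proof
      fix y assume y: "y \<in> ball x \<delta>"
      have "of_real y \<in> T" using y that(2) by auto
      then have "((\<lambda>t. (deriv ^^ n) h (of_real t)) has_vector_derivative (deriv ^^ Suc n) h (of_real y)) (at y)"
        using deriv_along_reals that(1,3) by blast
      then have "(Dn n has_vector_derivative (deriv ^^ Suc n) h (of_real y)) (at y)"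
        by (rule has_vector_derivative_transform_within_open[where S="ball x \<delta>"]) (use y Suc in auto)
      then show "Dn (Suc n) y = (deriv ^^ Suc n) h (of_real y)"
        by (simp add: Dn_def vector_derivative_at)
    qed
  qed
  show ?thesis unfolding smooth_on_def
  proof (intro exI[of _ Dn] conjI ballI allI)
    fix n x assume x: "x \<in> U"
    obtain \<delta> T h where "\<delta> > 0" "open T" "of_real ` ball x \<delta> \<subseteq> T" "h holomorphic_on T"
      "\<forall>y\<in>ball x \<delta>. g y = h (of_real y)"
      using assms[OF x] unfolding has_holomorphic_extension_def by metis
    note Dn = Dn_eq[OF \<open>open T\<close> \<open>of_real ` ball x \<delta> \<subseteq> T\<close> \<open>h holomorphic_on T\<close>
        \<open>\<forall>y\<in>ball x \<delta>. g y = h (of_real y)\<close>]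
    have "of_real x \<in> T" using \<open>\<delta> > 0\<close> \<open>of_real ` ball x \<delta> \<subseteq> T\<close> by auto
    have "((\<lambda>t. (deriv ^^ n) h (of_real t)) has_vector_derivative (deriv ^^ Suc n) h (of_real x)) (at x)"
      using deriv_along_reals \<open>open T\<close> \<open>h holomorphic_on T\<close> \<open>of_real x \<in> T\<close> by blast
    then have "(Dn n has_vector_derivative (deriv ^^ Suc n) h (of_real x)) (at x)"
      by (rule has_vector_derivative_transform_within_open[where S="ball x \<delta>"]) (use \<open>\<delta> > 0\<close> Dn in auto)
    then show "(Dn n has_vector_derivative Dn (Suc n) x) (at x)"
      using Dn[of "Suc n"] \<open>\<delta> > 0\<close> by simp
  qed (simp add: Dn_def)
qed

section \<open>Unit vectors with aligned phase\<close>

lemma vnorm_nonneg: "vnorm I u \<ge> 0"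
  unfolding vnorm_def by (simp add: sum_nonneg)

lemma vnorm_sq: "(vnorm I u)\<^sup>2 = (\<Sum>j\<in>I. (cmod (u j))\<^sup>2)"
  unfolding vnorm_def by (simp add: sum_nonneg)

lemma vnorm_pos: "finite I \<Longrightarrow> j \<in> I \<Longrightarrow> u j \<noteq> 0 \<Longrightarrow> vnorm I u > 0"
  unfolding vnorm_def by (intro real_sqrt_gt_zero sum_pos2) auto

lemma vinner_self: "vinner I u u = of_real ((vnorm I u)\<^sup>2)"
  by (simp add: vinner_def vnorm_sq complex_norm_square flip: of_real_power)

lemma vinner_scaleL: "vinner I (\<lambda>j. c * u j) w = c * vinner I u w"
  by (simp add: vinner_def sum_distrib_left mult.assoc)

lemma vnorm_scale: "vnorm I (\<lambda>j. c * u j) = cmod c * vnorm I u"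
  by (simp add: vnorm_def norm_mult power_mult_distrib real_sqrt_mult flip: sum_distrib_left)

lemma vinner_Cauchy_Schwarz: "cmod (vinner I u w) \<le> vnorm I u * vnorm I w"
proof -
  have "cmod (vinner I u w) \<le> (\<Sum>j\<in>I. cmod (u j) * cmod (w j))"
    unfolding vinner_def by (rule order_trans[OF norm_sum]) (simp add: norm_mult)
  also have "\<dots> \<le> vnorm I u * vnorm I w"
    using L2_set_mult_ineq[of "\<lambda>j. cmod (u j)" "\<lambda>j. cmod (w j)" I]
    by (simp add: vnorm_def L2_set_def)
  finally show ?thesis .
qed

lemma vnorm_pos_if_vinner_nonzero: "vinner I u w \<noteq> 0 \<Longrightarrow> vnorm I u > 0"
  using vinner_Cauchy_Schwarz[of I u w] vnorm_nonneg[of I u]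
  by (metis linorder_not_less mult_eq_0_iff nless_le zero_less_norm_iff)

lemma vnorm_diff_sq:
  "(vnorm I (\<lambda>j. u j - w j))\<^sup>2 = (vnorm I u)\<^sup>2 + (vnorm I w)\<^sup>2 - 2 * Re (vinner I u w)"
proof -
  have "(cmod (x - y))\<^sup>2 = (cmod x)\<^sup>2 + (cmod y)\<^sup>2 - 2 * Re (x * cnj y)" for x y :: complex
    by (simp only: cmod_power2) (simp add: power2_eq_square algebra_simps)
  then show ?thesis
    by (simp add: vnorm_sq vinner_def sum.distrib sum_subtractf Re_sum sum_distrib_left)
qed

lemma is_eigvec_scale: "is_eigvec I A \<mu> u \<Longrightarrow> c \<noteq> 0 \<Longrightarrow> is_eigvec I A \<mu> (\<lambda>j. c * u j)"
  unfolding is_eigvec_def by (simp add: mult.left_commute flip: sum_distrib_left)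

lemma exists_unit_eigvec:
  assumes "finite I" "\<mu> \<in> eigenvalues_on I A"
  shows "\<exists>u. is_eigvec I A \<mu> u \<and> vnorm I u = 1"
proof -
  obtain w where w: "is_eigvec I A \<mu> w" using assms(2) unfolding eigenvalues_on_def by blast
  then have "vnorm I w > 0" using assms(1) vnorm_pos unfolding is_eigvec_def by blast
  define c where "c = complex_of_real (1 / vnorm I w)"
  have "is_eigvec I A \<mu> (\<lambda>j. c * w j)"
    using w \<open>vnorm I w > 0\<close> by (intro is_eigvec_scale) (auto simp: c_def)
  moreover have "vnorm I (\<lambda>j. c * w j) = 1"
    using \<open>vnorm I w > 0\<close> unfolding vnorm_scale by (simp add: c_def norm_divide)
  ultimately show ?thesis by blast
qed

text \<open>The unit vector on the line of \<open>u\<close> whose inner product with \<open>w\<close> is positive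
  (the zero vector if \<open>vinner I u w = 0\<close>).\<close>
definition aligned_unit :: "nat set \<Rightarrow> (nat \<Rightarrow> complex) \<Rightarrow> (nat \<Rightarrow> complex) \<Rightarrow> nat \<Rightarrow> complex" where
  "aligned_unit I w u = (\<lambda>j. cnj (vinner I u w) / of_real (cmod (vinner I u w) * vnorm I u) * u j)"

lemma aligned_unit_scale:
  assumes "c \<noteq> 0" "\<And>k. k \<in> I \<Longrightarrow> u k = c * v k" "j \<in> I"
  shows "aligned_unit I w u j = aligned_unit I w v j"
proof -
  have u: "vinner I u w = c * vinner I v w" "vnorm I u = cmod c * vnorm I v"
    using vinner_scaleL[of I c v w] vnorm_scale[of I c v] assms(2)
    by (simp_all add: vinner_def vnorm_def)
  have "cnj c * c = of_real (cmod c * cmod c)"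
    by (metis complex_norm_square mult.commute power2_eq_square)
  then have unit: "cnj c * c / of_real (cmod c * cmod c) = 1"
    using assms(1) by simp
  have "aligned_unit I w u j = (cnj c * c / of_real (cmod c * cmod c)) * aligned_unit I w v j"
    unfolding aligned_unit_def u assms(2)[OF assms(3)] by (simp add: norm_mult mult_ac)
  then show ?thesis unfolding unit by simp
qed

lemma is_eigvec_aligned_unit:
  assumes "is_eigvec I A \<mu> u" "vinner I u w \<noteq> 0"
  shows "is_eigvec I A \<mu> (aligned_unit I w u)"
  unfolding aligned_unit_def using vnorm_pos_if_vinner_nonzero[OF assms(2)] assms
  by (intro is_eigvec_scale) auto

lemma vnorm_aligned_unit: "vinner I u w \<noteq> 0 \<Longrightarrow> vnorm I (aligned_unit I w u) = 1"
  using vnorm_pos_if_vinner_nonzero[of I u w]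
  unfolding aligned_unit_def vnorm_scale by (simp add: norm_divide norm_mult)

lemma vinner_aligned_unit:
  "vinner I (aligned_unit I w u) w = of_real (cmod (vinner I u w) / vnorm I u)"
proof (cases "vinner I u w = 0")
  case False
  have "vinner I u w * cnj (vinner I u w) = (of_real (cmod (vinner I u w)))\<^sup>2"
    by (simp add: complex_norm_square flip: of_real_power)
  then show ?thesis
    using False unfolding aligned_unit_def vinner_scaleL by (simp add: field_simps power2_eq_square)
qed (simp add: aligned_unit_def vinner_def)

lemma vnorm_aligned_unit_diff_sq:
  assumes "vnorm I w = 1" "vinner I u w \<noteq> 0"
  shows "(vnorm I (\<lambda>j. aligned_unit I w u j - w j))\<^sup>2 = 2 - 2 * cmod (vinner I u w) / vnorm I u"
  using assms by (simp add: vnorm_diff_sq vnorm_aligned_unit vinner_aligned_unit)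

lemma norm_vinner_ge_INF_phase_dist:
  assumes "vnorm I u = 1" "vnorm I w = 1"
  shows "1 - (INF \<theta>::real. vnorm I (\<lambda>j. u j - cis \<theta> * w j)) \<le> cmod (vinner I u w)"
proof -
  have "1 - cmod (vinner I u w) \<le> vnorm I (\<lambda>j. u j - cis \<theta> * w j)" for \<theta>
  proof -
    have "vinner I u w = vinner I (\<lambda>j. u j - cis \<theta> * w j) w + cis \<theta> * vinner I w w"
      by (simp add: vinner_def algebra_simps sum_distrib_left flip: sum.distrib)
    then have "vinner I u w - vinner I (\<lambda>j. u j - cis \<theta> * w j) w = cis \<theta>"
      using assms(2) by (simp add: vinner_self)
    then have "1 \<le> cmod (vinner I u w) + cmod (vinner I (\<lambda>j. u j - cis \<theta> * w j) w)"
      by (metis norm_cis norm_triangle_ineq4)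
    then show ?thesis
      using vinner_Cauchy_Schwarz[of I "\<lambda>j. u j - cis \<theta> * w j" w] assms(2) by simp
  qed
  then have "1 - cmod (vinner I u w) \<le> (INF \<theta>::real. vnorm I (\<lambda>j. u j - cis \<theta> * w j))"
    by (intro cINF_greatest) auto
  then show ?thesis by simp
qed

lemma tendsto_norm_vinner_one:
  assumes "\<forall>\<^sub>F x in F. vnorm I (u x) = 1" "vnorm I w = 1"
    and "((\<lambda>x. INF \<theta>::real. vnorm I (\<lambda>j. u x j - cis \<theta> * w j)) \<longlongrightarrow> 0) F"
  shows "((\<lambda>x. cmod (vinner I (u x) w)) \<longlongrightarrow> 1) F"
proof (rule tendsto_sandwich)
  have unit_bound: "cmod (vinner I v w) \<le> 1" if "vnorm I v = 1" for v
    using vinner_Cauchy_Schwarz[of I v w] that assms(2) by simp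
  show "\<forall>\<^sub>F x in F. 1 - (INF \<theta>::real. vnorm I (\<lambda>j. u x j - cis \<theta> * w j)) \<le> cmod (vinner I (u x) w)"
    using assms(1) by eventually_elim (use assms(2) norm_vinner_ge_INF_phase_dist in blast)
  show "\<forall>\<^sub>F x in F. cmod (vinner I (u x) w) \<le> 1"
    using assms(1) by eventually_elim (rule unit_bound)
  show "((\<lambda>x. 1 - (INF \<theta>::real. vnorm I (\<lambda>j. u x j - cis \<theta> * w j))) \<longlongrightarrow> 1) F"
    using tendsto_diff[OF tendsto_const assms(3)] by simp
qed simp

lemma tendsto_aligned_unit:
  assumes "\<forall>\<^sub>F x in F. vnorm I (u x) = 1" "vnorm I w = 1"
    and "((\<lambda>x. INF \<theta>::real. vnorm I (\<lambda>j. u x j - cis \<theta> * w j)) \<longlongrightarrow> 0) F"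
  shows "((\<lambda>x. vnorm I (\<lambda>j. aligned_unit I w (u x) j - w j)) \<longlongrightarrow> 0) F"
proof -
  have lim: "((\<lambda>x. cmod (vinner I (u x) w)) \<longlongrightarrow> 1) F"
    using tendsto_norm_vinner_one[OF assms] .
  have "\<forall>\<^sub>F x in F. 0 < cmod (vinner I (u x) w)"
    by (rule order_tendstoD(1)[OF lim]) simp
  then have "\<forall>\<^sub>F x in F. vinner I (u x) w \<noteq> 0"
    by eventually_elim auto
  with assms(1) have "\<forall>\<^sub>F x in F. sqrt (2 - 2 * cmod (vinner I (u x) w)) =
      vnorm I (\<lambda>j. aligned_unit I w (u x) j - w j)"
  proof eventually_elim
    case (elim x)
    then show ?case
      using vnorm_aligned_unit_diff_sq[OF assms(2), of "u x"] vnorm_nonneg by (metis real_sqrt_unique div_by_1)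
  qed
  moreover have "((\<lambda>x. sqrt (2 - 2 * cmod (vinner I (u x) w))) \<longlongrightarrow> sqrt (2 - 2 * 1)) F"
    by (intro tendsto_intros lim)
  ultimately show ?thesis by (simp add: tendsto_cong)
qed

lemma has_holomorphic_extension_vinner:
  "(\<And>k. k \<in> I \<Longrightarrow> has_holomorphic_extension B (\<lambda>x. v x k)) \<Longrightarrow>
    has_holomorphic_extension B (\<lambda>x. vinner I (v x) w)"
  unfolding vinner_def
  by (intro has_holomorphic_extension_sum has_holomorphic_extension_mult has_holomorphic_extension_const)

lemma has_holomorphic_extension_vnorm:
  assumes "\<And>k. k \<in> I \<Longrightarrow> has_holomorphic_extension B (\<lambda>x. v x k)" "\<And>x. x \<in> B \<Longrightarrow> vnorm I (v x) > 0"
  shows "has_holomorphic_extension B (\<lambda>x. of_real (vnorm I (v x)))"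
proof -
  have "has_holomorphic_extension B (\<lambda>x. vinner I (v x) (v x))"
    unfolding vinner_def using assms(1)
    by (intro has_holomorphic_extension_sum has_holomorphic_extension_mult has_holomorphic_extension_cnj)
  then have "has_holomorphic_extension B (\<lambda>x. of_real ((vnorm I (v x))\<^sup>2))"
    by (rule has_holomorphic_extension_cong) (simp add: vinner_self)
  then have "has_holomorphic_extension B (\<lambda>x. of_real (sqrt ((vnorm I (v x))\<^sup>2)))"
    by (rule has_holomorphic_extension_sqrt) (use assms(2) zero_less_power in blast)
  then show ?thesis by (rule has_holomorphic_extension_cong) (simp add: vnorm_nonneg)
qed

lemma has_holomorphic_extension_aligned_unit:
  assumes "\<And>k. k \<in> I \<Longrightarrow> has_holomorphic_extension B (\<lambda>x. v x k)" "\<And>x. x \<in> B \<Longrightarrow> vinner I (v x) w \<noteq> 0"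
    "j \<in> I"
  shows "has_holomorphic_extension B (\<lambda>x. aligned_unit I w (v x) j)"
proof -
  have pos: "vnorm I (v x) > 0" if "x \<in> B" for x
    using assms(2)[OF that] by (rule vnorm_pos_if_vinner_nonzero)
  then show ?thesis
    unfolding aligned_unit_def of_real_mult using assms
    by (intro has_holomorphic_extension_mult has_holomorphic_extension_divide has_holomorphic_extension_cnj
      has_holomorphic_extension_vinner has_holomorphic_extension_norm has_holomorphic_extension_vnorm)
      (auto dest: pos)
qed

section \<open>Determinants, adjugates and simple eigenvalues\<close>

lemma det_holomorphic_on:
  assumes "\<And>z. M z \<in> carrier_mat n n"
    and "\<And>i j. i < n \<Longrightarrow> j < n \<Longrightarrow> (\<lambda>z. M z $$ (i, j)) holomorphic_on T"
  shows "(\<lambda>z. det (M z)) holomorphic_on T"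
proof -
  have "p j < n" if "p permutes {0..<n}" "j < n" for p j
    using that permutes_in_image by fastforce
  then show ?thesis
    unfolding det_def'[OF assms(1)] by (intro holomorphic_intros assms(2)) auto
qed

lemma cofactor_holomorphic_on:
  assumes "\<And>z. M z \<in> carrier_mat n n"
    and "\<And>i j. i < n \<Longrightarrow> j < n \<Longrightarrow> (\<lambda>z. M z $$ (i, j)) holomorphic_on T"
  shows "(\<lambda>z. cofactor (M z) i k) holomorphic_on T"
proof -
  have "(\<lambda>z. det (mat_delete (M z) i k)) holomorphic_on T"
  proof (rule det_holomorphic_on)
    show "mat_delete (M z) i k \<in> carrier_mat (n - 1) (n - 1)" for z
      using mat_delete_carrier[OF assms(1)] .
    fix a b assume ab: "a < n - 1" "b < n - 1"
    have "(\<lambda>z. M z $$ (if a < i then a else Suc a, if b < k then b else Suc b)) holomorphic_on T"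
      by (rule assms(2)) (use ab in auto)
    moreover have "dim_row (M z) = n" "dim_col (M z) = n" for z
      using assms(1) by auto
    ultimately show "(\<lambda>z. mat_delete (M z) i k $$ (a, b)) holomorphic_on T"
      using ab by (simp add: mat_delete_def)
  qed
  then show ?thesis unfolding cofactor_def by (intro holomorphic_intros)
qed

lemma det_affine_has_derivative:
  fixes A B C :: "complex mat"
  obtains a b where "continuous_on UNIV a" "continuous_on UNIV b"
    "\<And>x. ((\<lambda>x. det (mat n n (\<lambda>ij. A $$ ij + fst x * B $$ ij + snd x * C $$ ij))) has_derivative
      (\<lambda>h. fst h * a x + snd h * b x)) (at x)"
proof -
  define M where "M x = mat n n (\<lambda>ij. A $$ ij + fst x * B $$ ij + snd x * C $$ ij)" for x :: "complex \<times> complex"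
  let ?P = "{p. p permutes {0..<n}}"
  define e where "e x i j = A $$ (i, j) + fst x * B $$ (i, j) + snd x * C $$ (i, j)" for x i j
  define a where "a x = (\<Sum>p\<in>?P. signof p * (\<Sum>i=0..<n. B $$ (i, p i) * (\<Prod>k\<in>{0..<n}-{i}. e x k (p k))))" for x
  define b where "b x = (\<Sum>p\<in>?P. signof p * (\<Sum>i=0..<n. C $$ (i, p i) * (\<Prod>k\<in>{0..<n}-{i}. e x k (p k))))" for x
  have entry: "M x $$ (i, p i) = e x i (p i)" if "p permutes {0..<n}" "i < n" for x p i
    using that permutes_in_image[OF that(1)] by (simp add: M_def e_def)
  have det_M: "det (M x) = (\<Sum>p\<in>?P. signof p * (\<Prod>i=0..<n. e x i (p i)))" for x
  proof -
    have "M x \<in> carrier_mat n n" by (simp add: M_def)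
    then have "det (M x) = (\<Sum>p\<in>?P. signof p * (\<Prod>i=0..<n. M x $$ (i, p i)))"
      by (rule det_def')
    also have "\<dots> = (\<Sum>p\<in>?P. signof p * (\<Prod>i=0..<n. e x i (p i)))"
      by (intro sum.cong refl arg_cong2[where f = "(*)"] prod.cong) (auto simp: entry)
    finally show ?thesis .
  qed
  have e_deriv: "((\<lambda>x. e x i j) has_derivative (\<lambda>h. fst h * B $$ (i, j) + snd h * C $$ (i, j))) (at x)"
    for i j x unfolding e_def by (auto intro!: derivative_eq_intros)
  show ?thesis
  proof
    show "continuous_on UNIV a" "continuous_on UNIV b"
      unfolding a_def b_def e_def by (intro continuous_intros)+
    fix x
    have "((\<lambda>x. \<Sum>p\<in>?P. signof p * (\<Prod>i=0..<n. e x i (p i))) has_derivative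
      (\<lambda>h. \<Sum>p\<in>?P. signof p * (\<Sum>i=0..<n. (fst h * B $$ (i, p i) + snd h * C $$ (i, p i)) *
         (\<Prod>k\<in>{0..<n}-{i}. e x k (p k))))) (at x)"
      by (intro has_derivative_sum has_derivative_mult_right has_derivative_prod e_deriv)
    then show "((\<lambda>x. det (mat n n (\<lambda>ij. A $$ ij + fst x * B $$ ij + snd x * C $$ ij))) has_derivative
      (\<lambda>h. fst h * a x + snd h * b x)) (at x)"
      unfolding det_M[unfolded M_def]
      by (rule has_derivative_eq_rhs)
        (simp add: fun_eq_iff a_def b_def algebra_simps sum.distrib sum_distrib_left)
  qed
qed

lemma char_poly_pencil_has_derivative:
  fixes C0 C1 :: "complex mat"
  assumes "C0 \<in> carrier_mat n n" "C1 \<in> carrier_mat n n"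
  obtains a b where "continuous_on UNIV a" "continuous_on UNIV b"
    "\<And>x. ((\<lambda>x. poly (char_poly (C0 + fst x \<cdot>\<^sub>m C1)) (snd x)) has_derivative
      (\<lambda>h. fst h * a x + snd h * b x)) (at x)"
proof -
  let ?M = "\<lambda>x. mat n n (\<lambda>ij. (- C0) $$ ij + fst x * (- C1) $$ ij + snd x * (1\<^sub>m n) $$ ij)"
  have "poly (char_poly (C0 + fst x \<cdot>\<^sub>m C1)) (snd x) = det (?M x)" for x
  proof -
    have "- char_matrix (C0 + fst x \<cdot>\<^sub>m C1) (snd x) = ?M x"
      using assms by (intro eq_matI) (auto simp: char_matrix_def)
    moreover have "C0 + fst x \<cdot>\<^sub>m C1 \<in> carrier_mat n n" using assms by simp
    ultimately show ?thesis by (simp add: char_poly_matrix)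
  qed
  moreover obtain a b where "continuous_on UNIV a" "continuous_on UNIV b"
    "\<And>x. ((\<lambda>x. det (?M x)) has_derivative (\<lambda>h. fst h * a x + snd h * b x)) (at x)"
    using det_affine_has_derivative[where A = "- C0" and B = "- C1" and C = "1\<^sub>m n" and n = n] by blast
  ultimately show ?thesis using that by presburger
qed

lemma mult_adj_mat_col_eq_zero:
  assumes "M \<in> carrier_mat n n" "det M = 0" "j < n"
  shows "M *\<^sub>v col (adj_mat M) j = 0\<^sub>v n"
proof -
  have "M *\<^sub>v col (adj_mat M) j = col (M * adj_mat M) j"
    by (rule col_mult2[OF assms(1) adj_mat(1)[OF assms(1)] assms(3), symmetric])
  also have "\<dots> = 0\<^sub>v n"
    using assms by (auto simp: adj_mat(2) intro!: eq_vecI)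
  finally show ?thesis .
qed

text \<open>Replacing row \<open>j\<close> of \<open>M\<close> by the unit row \<open>e\<^sub>j\<close> gives a matrix of determinant \<open>cofactor M j j\<close>
  that annihilates \<open>u - c v\<close> for the multiple \<open>c v\<close> of \<open>v\<close> agreeing with \<open>u\<close> in coordinate \<open>j\<close>.\<close>
lemma kernel_subset_span_adj_mat_col:
  fixes M :: "complex mat"
  assumes M: "M \<in> carrier_mat n n" "det M = 0" and j: "j < n" "cofactor M j j \<noteq> 0"
    and u: "u \<in> carrier_vec n" "M *\<^sub>v u = 0\<^sub>v n"
  shows "u = (u $ j / cofactor M j j) \<cdot>\<^sub>v col (adj_mat M) j"
proof -
  define v where "v = col (adj_mat M) j"
  define c where "c = u $ j / cofactor M j j"
  define u' where "u' = u - c \<cdot>\<^sub>v v"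
  define M' where "M' = mat n n (\<lambda>(r, s). if r = j then (if s = j then 1 else 0) else M $$ (r, s))"
  have v: "v \<in> carrier_vec n" "v $ j = cofactor M j j" "M *\<^sub>v v = 0\<^sub>v n"
    using M j mult_adj_mat_col_eq_zero[OF M j(1)] by (auto simp: v_def adj_mat_def)
  have u': "u' \<in> carrier_vec n" "u' $ j = 0"
    using u v j by (auto simp: u'_def c_def)
  have M'c: "M' \<in> carrier_mat n n" by (simp add: M'_def)
  have row_sum: "(\<Sum>k<n. M $$ (i, k) * w $ k) = (M *\<^sub>v w) $ i" if "w \<in> carrier_vec n" "i < n" for w i
    using M that by (simp add: scalar_prod_def lessThan_atLeast0 row_def)
  have "M' *\<^sub>v u' = 0\<^sub>v n"
  proof (rule eq_vecI)
    fix i assume "i < dim_vec (0\<^sub>v n :: complex vec)"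
    then have i: "i < n" by simp
    have "(M' *\<^sub>v u') $ i = (\<Sum>k<n. M' $$ (i, k) * u' $ k)"
      using M'c u' i by (simp add: scalar_prod_def lessThan_atLeast0 row_def)
    also have "\<dots> = 0"
    proof (cases "i = j")
      case True
      have "(\<Sum>k<n. M' $$ (i, k) * u' $ k) = (\<Sum>k<n. if k = j then u' $ k else 0)"
        using True i by (intro sum.cong) (auto simp: M'_def)
      then show ?thesis using j u' by simp
    next
      case False
      then have "(\<Sum>k<n. M' $$ (i, k) * u' $ k) =
          (\<Sum>k<n. M $$ (i, k) * u $ k) - c * (\<Sum>k<n. M $$ (i, k) * v $ k)"
        using i u v by (simp add: M'_def u'_def sum_distrib_left sum_subtractf algebra_simps)
      then show ?thesis using i u v by (simp add: row_sum)
    qed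
    finally show "(M' *\<^sub>v u') $ i = 0\<^sub>v n $ i" using i by simp
  qed (simp add: M'_def)
  moreover have "det M' = cofactor M j j"
  proof -
    have "det M' = (\<Sum>s<n. M' $$ (j, s) * cofactor M' j s)"
      by (rule laplace_expansion_row[OF M'c j(1)])
    also have "\<dots> = (\<Sum>s<n. if s = j then cofactor M' j j else 0)"
      using j by (intro sum.cong) (auto simp: M'_def)
    also have "\<dots> = cofactor M' j j"
      using j by simp
    also have "mat_delete M' j j = mat_delete M j j"
      using M by (intro eq_matI) (auto simp: mat_delete_def M'_def)
    then have "cofactor M' j j = cofactor M j j" by (simp add: cofactor_def)
    finally show ?thesis .
  qed
  ultimately have "u' = 0\<^sub>v n"
    using det_0_iff_vec_prod_zero[OF M'c] u'(1) j(2) by auto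
  then show ?thesis
    using u v by (intro eq_vecI) (auto simp: u'_def c_def v_def[symmetric] vec_eq_iff)
qed

lemma cofactor_neg_char_matrix_diag:
  assumes "A \<in> carrier_mat n n" "j < n"
  shows "cofactor (- char_matrix A \<mu>) j j = poly (char_poly (mat_delete A j j)) \<mu>"
proof -
  have "mat_delete (- char_matrix A \<mu>) j j = - char_matrix (mat_delete A j j) \<mu>"
    using assms by (intro eq_matI) (auto simp: char_matrix_def mat_delete_def)
  then show ?thesis
    using char_poly_matrix[OF mat_delete_carrier[OF assms(1)]] by (simp add: cofactor_def)
qed

lemma poly_pderiv_char_poly_eq_sum_cofactors:
  assumes "A \<in> carrier_mat n n"
  shows "poly (pderiv (char_poly A)) \<mu> = (\<Sum>i<n. cofactor (- char_matrix A \<mu>) i i)"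
  using assms by (simp add: pderiv_char_poly poly_sum cofactor_neg_char_matrix_diag)

lemma pderiv_char_poly_nonzero_if_distinct_eigenvalues:
  fixes A :: "complex mat"
  assumes A: "A \<in> carrier_mat n n" and "card {\<mu>. eigenvalue A \<mu>} = n" "eigenvalue A \<mu>"
  shows "poly (pderiv (char_poly A)) \<mu> \<noteq> 0"
proof -
  obtain as where cp: "char_poly A = (\<Prod>a\<leftarrow>as. [:- a, 1:])" and len: "length as = n"
    using char_poly_factorized[OF A] by blast
  have "poly (char_poly A) x = (\<Prod>a\<leftarrow>as. x - a)" for x
    unfolding cp by (simp add: poly_prod_list o_def)
  then have eig: "{\<mu>. eigenvalue A \<mu>} = set as"
    by (auto simp: eigenvalue_root_char_poly[OF A] prod_list_zero_iff)
  then have "distinct as"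
    using assms(2) len by (simp add: card_distinct)
  then have "char_poly A = (\<Prod>a\<in>set as. [:- a, 1:])"
    unfolding cp by (simp add: prod.distinct_set_conv_list)
  also have "\<dots> = [:- \<mu>, 1:] * (\<Prod>a\<in>set as - {\<mu>}. [:- a, 1:])"
    using assms(3) eig by (intro prod.remove) auto
  finally have cp': "char_poly A = [:- \<mu>, 1:] * (\<Prod>a\<in>set as - {\<mu>}. [:- a, 1:])" .
  have "poly (pderiv (char_poly A)) \<mu> = poly (\<Prod>a\<in>set as - {\<mu>}. [:- a, 1:]) \<mu>"
    unfolding cp' by (simp only: pderiv_mult poly_add poly_mult) (simp add: pderiv_pCons)
  also have "\<dots> = (\<Prod>a\<in>set as - {\<mu>}. \<mu> - a)"
    by (simp add: poly_prod)
  finally show ?thesis by simp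
qed

section \<open>Holomorphic dependence of a simple eigenvalue and its eigenline\<close>

lemma bounded_linear_shear:
  "bounded_linear (\<lambda>h :: complex \<times> complex. (fst h, fst h * c + snd h * d))"
  by (intro bounded_linear_Pair bounded_linear_add bounded_linear_fst
      bounded_linear_compose[OF bounded_linear_mult_left bounded_linear_fst]
      bounded_linear_compose[OF bounded_linear_mult_left bounded_linear_snd])

text \<open>Apply the inverse function theorem to \<open>(z, w) \<mapsto> (z, p (z, w))\<close>; its Jacobian is invertible
  exactly where \<open>b \<noteq> 0\<close>.\<close>
lemma holomorphic_implicit_function:
  fixes p a b :: "complex \<times> complex \<Rightarrow> complex"
  assumes S: "open S" "x0 \<in> S" and "p x0 = 0" "b x0 \<noteq> 0"
    and deriv: "\<And>x. x \<in> S \<Longrightarrow> (p has_derivative (\<lambda>h. fst h * a x + snd h * b x)) (at x)"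
    and cont: "continuous_on S a" "continuous_on S b"
  obtains U \<Omega> \<mu> where "open U" "x0 \<in> U" "open \<Omega>" "\<mu> holomorphic_on \<Omega>"
    "\<And>z. z \<in> \<Omega> \<Longrightarrow> p (z, \<mu> z) = 0"
    "\<And>z w. (z, w) \<in> U \<Longrightarrow> p (z, w) = 0 \<Longrightarrow> z \<in> \<Omega> \<and> \<mu> z = w"
proof -
  define \<Phi> where "\<Phi> x = (fst x, p x)" for x
  define \<Phi>' where "\<Phi>' x = Blinfun (\<lambda>h. (fst h, fst h * a x + snd h * b x))" for x
  have \<Phi>'_apply: "blinfun_apply (\<Phi>' x) h = (fst h, fst h * a x + snd h * b x)" for x h
    by (simp add: \<Phi>'_def bounded_linear_Blinfun_apply[OF bounded_linear_shear])
  have \<Phi>_deriv: "(\<Phi> has_derivative blinfun_apply (\<Phi>' x)) (at x)" if "x \<in> S" for x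
    unfolding \<Phi>_def
    by (rule has_derivative_eq_rhs[OF has_derivative_Pair[OF has_derivative_fst[OF has_derivative_ident] deriv[OF that]]])
      (simp add: fun_eq_iff \<Phi>'_apply)
  define \<Psi> where "\<Psi> = Blinfun (\<lambda>h. (fst h, fst h * (- a x0 / b x0) + snd h * (1 / b x0)))"
  have "blinfun_apply \<Psi> h = (fst h, fst h * (- a x0 / b x0) + snd h * (1 / b x0))" for h
    by (simp only: \<Psi>_def bounded_linear_Blinfun_apply[OF bounded_linear_shear])
  then have inverse: "\<Psi> o\<^sub>L \<Phi>' x0 = id_blinfun"
    using \<open>b x0 \<noteq> 0\<close> by (intro blinfun_eqI) (simp add: \<Phi>'_apply field_simps)
  have \<Phi>'_cont: "continuous_on S \<Phi>'"
    by (rule continuous_on_blinfun_componentwise) (use cont in \<open>auto simp: \<Phi>'_apply intro!: continuous_intros\<close>)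
  obtain U V g g' where U: "open U" "U \<subseteq> S" "x0 \<in> U" and V: "open V" "\<Phi> x0 \<in> V"
    and hom: "homeomorphism U V \<Phi> g"
    and g_deriv: "\<And>y. y \<in> V \<Longrightarrow> (g has_derivative g' y) (at y)"
    and g'_eq: "\<And>y. y \<in> V \<Longrightarrow> g' y = inv_into UNIV (blinfun_apply (\<Phi>' (g y)))"
    and bij: "\<And>y. y \<in> V \<Longrightarrow> bij (blinfun_apply (\<Phi>' (g y)))"
    using inverse_function_theorem[OF S(1) \<Phi>_deriv \<Phi>'_cont S(2) inverse] by blast
  have g_\<Phi>: "\<And>x. x \<in> U \<Longrightarrow> g (\<Phi> x) = x" and \<Phi>_g: "\<And>y. y \<in> V \<Longrightarrow> \<Phi> (g y) = y" and "\<Phi> ` U = V"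
    using hom unfolding homeomorphism_def by auto
  define \<Omega> where "\<Omega> = (\<lambda>z. (z, 0 :: complex)) -` V"
  define \<mu> where "\<mu> z = snd (g (z, 0))" for z
  have g_eq: "g (z, 0) = (z, \<mu> z)" and root: "p (z, \<mu> z) = 0" if "z \<in> \<Omega>" for z
  proof -
    have "fst (g (z, 0)) = z" "p (g (z, 0)) = 0"
      using \<Phi>_g[of "(z, 0)"] that unfolding \<Omega>_def \<Phi>_def by auto
    then show "g (z, 0) = (z, \<mu> z)" "p (z, \<mu> z) = 0"
      unfolding \<mu>_def by (metis prod.collapse)+
  qed
  have "open \<Omega>" unfolding \<Omega>_def by (rule open_vimage[OF V(1)]) (intro continuous_intros)
  moreover have "\<mu> holomorphic_on \<Omega>"
    unfolding holomorphic_on_def field_differentiable_def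
  proof
    fix z assume z: "z \<in> \<Omega>"
    let ?w = "g (z, 0)"
    have zV: "(z, 0) \<in> V" using z by (simp add: \<Omega>_def)
    have "b ?w \<noteq> 0"
    proof
      assume "b ?w = 0"
      then have "blinfun_apply (\<Phi>' ?w) (0, 1) = blinfun_apply (\<Phi>' ?w) (0, 0)" by (simp add: \<Phi>'_apply)
      with bij[OF zV] show False by (metis bij_def injD prod.inject zero_neq_one)
    qed
    then have "blinfun_apply (\<Phi>' ?w) (h, - h * a ?w / b ?w) = (h, 0)" for h
      by (simp add: \<Phi>'_apply field_simps)
    then have g'_apply: "g' (z, 0) (h, 0) = (h, - h * a ?w / b ?w)" for h
      unfolding g'_eq[OF zV] using bij[OF zV] by (metis bij_def inv_f_eq)
    have "((\<lambda>z. (z, 0 :: complex)) has_derivative (\<lambda>h. (h, 0))) (at z)"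
      by (intro derivative_eq_intros) auto
    from has_derivative_compose[OF this g_deriv[OF zV]]
    have "((\<lambda>z. g (z, 0)) has_derivative (\<lambda>h. g' (z, 0) (h, 0))) (at z)" by simp
    from has_derivative_snd[OF this]
    have "(\<mu> has_derivative (*) (- a ?w / b ?w)) (at z)"
      unfolding \<mu>_def by (rule has_derivative_eq_rhs) (simp add: g'_apply fun_eq_iff)
    then show "\<exists>f'. (\<mu> has_field_derivative f') (at z within \<Omega>)"
      unfolding has_field_derivative_def using has_derivative_at_withinI by blast
  qed
  moreover have "z \<in> \<Omega> \<and> \<mu> z = w" if "(z, w) \<in> U" "p (z, w) = 0" for z w
  proof -
    have "\<Phi> (z, w) = (z, 0)" using that(2) by (simp add: \<Phi>_def)
    then have "(z, 0) \<in> V" and "g (z, 0) = (z, w)"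
      using \<open>\<Phi> ` U = V\<close> g_\<Phi>[OF that(1)] that(1) by force+
    then show ?thesis by (simp add: \<Omega>_def \<mu>_def)
  qed
  ultimately show ?thesis using that U(1,3) root by blast
qed

lemma simple_eigenvalue_holomorphic_branch:
  fixes C0 C1 :: "complex mat" and lam :: "real \<Rightarrow> complex"
  assumes C: "C0 \<in> carrier_mat n n" "C1 \<in> carrier_mat n n"
    and lam_cont: "isCont lam \<epsilon>0"
    and eig: "\<forall>\<^sub>F \<epsilon> in nhds \<epsilon>0. eigenvalue (C0 + of_real \<epsilon> \<cdot>\<^sub>m C1) (lam \<epsilon>)"
    and simple: "poly (pderiv (char_poly (C0 + of_real \<epsilon>0 \<cdot>\<^sub>m C1))) (lam \<epsilon>0) \<noteq> 0"
  obtains \<Omega> \<mu> where "open \<Omega>" "\<mu> holomorphic_on \<Omega>"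
    "\<And>z. z \<in> \<Omega> \<Longrightarrow> poly (char_poly (C0 + z \<cdot>\<^sub>m C1)) (\<mu> z) = 0"
    "\<forall>\<^sub>F \<epsilon> in nhds \<epsilon>0. of_real \<epsilon> \<in> \<Omega> \<and> \<mu> (of_real \<epsilon>) = lam \<epsilon>"
proof -
  define p where "p = (\<lambda>x. poly (char_poly (C0 + fst x \<cdot>\<^sub>m C1)) (snd x))"
  define x0 where "x0 = (complex_of_real \<epsilon>0, lam \<epsilon>0)"
  have A: "C0 + z \<cdot>\<^sub>m C1 \<in> carrier_mat n n" for z using C by simp
  obtain a b where ab: "continuous_on UNIV a" "continuous_on UNIV b"
      "\<And>x. (p has_derivative (\<lambda>h. fst h * a x + snd h * b x)) (at x)"
    using char_poly_pencil_has_derivative[OF C] unfolding p_def by blast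
  have "p x0 = 0"
    using eventually_nhds_x_imp_x[OF eig] eigenvalue_root_char_poly[OF A] by (simp add: p_def x0_def)
  have "b x0 = poly (pderiv (char_poly (C0 + of_real \<epsilon>0 \<cdot>\<^sub>m C1))) (lam \<epsilon>0)"
  proof (rule DERIV_unique)
    have "((\<lambda>w. (complex_of_real \<epsilon>0, w)) has_derivative (\<lambda>k. (0, k))) (at (lam \<epsilon>0))"
      by (intro derivative_eq_intros) auto
    from has_derivative_compose[OF this ab(3)]
    show "((\<lambda>w. p (of_real \<epsilon>0, w)) has_field_derivative b x0) (at (lam \<epsilon>0))"
      unfolding has_field_derivative_def x0_def
      by (rule has_derivative_eq_rhs) (simp add: fun_eq_iff mult.commute)
    show "((\<lambda>w. p (of_real \<epsilon>0, w)) has_field_derivative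
        poly (pderiv (char_poly (C0 + of_real \<epsilon>0 \<cdot>\<^sub>m C1))) (lam \<epsilon>0)) (at (lam \<epsilon>0))"
      by (simp add: p_def poly_DERIV)
  qed
  with simple have "b x0 \<noteq> 0" by simp
  obtain U \<Omega> \<mu> where U: "open U" "x0 \<in> U" and \<Omega>: "open \<Omega>" "\<mu> holomorphic_on \<Omega>"
    and root: "\<And>z. z \<in> \<Omega> \<Longrightarrow> p (z, \<mu> z) = 0"
    and unique: "\<And>z w. (z, w) \<in> U \<Longrightarrow> p (z, w) = 0 \<Longrightarrow> z \<in> \<Omega> \<and> \<mu> z = w"
    using holomorphic_implicit_function[OF open_UNIV UNIV_I \<open>p x0 = 0\<close> \<open>b x0 \<noteq> 0\<close> ab(3)]
      ab(1,2) by blast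
  have "((\<lambda>\<epsilon>. (complex_of_real \<epsilon>, lam \<epsilon>)) \<longlongrightarrow> x0) (at \<epsilon>0)"
    using lam_cont unfolding x0_def isCont_def by (intro tendsto_intros)
  then have "\<forall>\<^sub>F \<epsilon> in nhds \<epsilon>0. (of_real \<epsilon>, lam \<epsilon>) \<in> U"
    using U unfolding eventually_nhds_conv_at by (auto simp: x0_def intro: topological_tendstoD)
  then have "\<forall>\<^sub>F \<epsilon> in nhds \<epsilon>0. of_real \<epsilon> \<in> \<Omega> \<and> \<mu> (of_real \<epsilon>) = lam \<epsilon>"
    using eig
  proof eventually_elim
    case (elim \<epsilon>)
    then show ?case
      using unique[of "of_real \<epsilon>" "lam \<epsilon>"] eigenvalue_root_char_poly[OF A] by (simp add: p_def)
  qed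
  with \<Omega> root show ?thesis using that unfolding p_def by auto
qed

text \<open>Near a simple eigenvalue the eigenspace is spanned by a column of the adjugate of the
  characteristic matrix, which depends holomorphically on the eigenvalue branch.\<close>
lemma simple_eigenvalue_local_eigenvector:
  fixes C0 C1 :: "complex mat" and lam :: "real \<Rightarrow> complex"
  assumes C: "C0 \<in> carrier_mat n n" "C1 \<in> carrier_mat n n"
    and lam_cont: "isCont lam \<epsilon>0"
    and eig: "\<forall>\<^sub>F \<epsilon> in nhds \<epsilon>0. eigenvalue (C0 + of_real \<epsilon> \<cdot>\<^sub>m C1) (lam \<epsilon>)"
    and simple: "poly (pderiv (char_poly (C0 + of_real \<epsilon>0 \<cdot>\<^sub>m C1))) (lam \<epsilon>0) \<noteq> 0"
  obtains \<delta> and v :: "real \<Rightarrow> complex vec" where "\<delta> > 0"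
    "\<And>k. k < n \<Longrightarrow> has_holomorphic_extension (ball \<epsilon>0 \<delta>) (\<lambda>\<epsilon>. v \<epsilon> $ k)"
    "\<And>\<epsilon> u. \<epsilon> \<in> ball \<epsilon>0 \<delta> \<Longrightarrow> eigenvector (C0 + of_real \<epsilon> \<cdot>\<^sub>m C1) u (lam \<epsilon>) \<Longrightarrow> \<exists>c. u = c \<cdot>\<^sub>v v \<epsilon>"
proof -
  define A where "A z = C0 + z \<cdot>\<^sub>m C1" for z
  have A: "A z \<in> carrier_mat n n" for z using C by (simp add: A_def)
  obtain \<Omega> \<mu> where \<Omega>: "open \<Omega>" "\<mu> holomorphic_on \<Omega>"
    and root: "\<And>z. z \<in> \<Omega> \<Longrightarrow> poly (char_poly (A z)) (\<mu> z) = 0"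
    and branch: "\<forall>\<^sub>F \<epsilon> in nhds \<epsilon>0. of_real \<epsilon> \<in> \<Omega> \<and> \<mu> (of_real \<epsilon>) = lam \<epsilon>"
    using simple_eigenvalue_holomorphic_branch[OF C lam_cont eig simple] unfolding A_def by blast
  have \<mu>0: "\<mu> (of_real \<epsilon>0) = lam \<epsilon>0" using eventually_nhds_x_imp_x[OF branch] by simp
  define M where "M z = - char_matrix (A z) (\<mu> z)" for z
  have M: "M z \<in> carrier_mat n n" for z using A by (simp add: M_def)
  have M_holo: "(\<lambda>z. M z $$ (i, k)) holomorphic_on \<Omega>" if "i < n" "k < n" for i k
  proof -
    have "M z $$ (i, k) = (if i = k then \<mu> z else 0) - C0 $$ (i, k) - z * C1 $$ (i, k)" for z
      using C that by (simp add: M_def A_def char_matrix_def)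
    then show ?thesis using \<Omega>(2) by (cases "i = k") (auto intro!: holomorphic_intros)
  qed
  have "(\<Sum>i<n. cofactor (M (of_real \<epsilon>0)) i i) \<noteq> 0"
    using simple \<mu>0 poly_pderiv_char_poly_eq_sum_cofactors[OF A] by (simp add: M_def A_def)
  then obtain j where j: "j < n" "cofactor (M (of_real \<epsilon>0)) j j \<noteq> 0"
    by (meson lessThan_iff sum.neutral)
  define T where "T = \<Omega> \<inter> (\<lambda>z. cofactor (M z) j j) -` (- {0})"
  have "open T" unfolding T_def
    using cofactor_holomorphic_on[OF M M_holo] \<Omega>(1)
    by (intro continuous_open_preimage holomorphic_on_imp_continuous_on) auto
  moreover have "of_real \<epsilon>0 \<in> T"
    using eventually_nhds_x_imp_x[OF branch] j(2) by (simp add: T_def)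
  moreover have "((\<lambda>\<epsilon>. complex_of_real \<epsilon>) \<longlongrightarrow> of_real \<epsilon>0) (at \<epsilon>0)"
    by (intro tendsto_intros)
  ultimately have "\<forall>\<^sub>F \<epsilon> in nhds \<epsilon>0. of_real \<epsilon> \<in> T"
    unfolding eventually_nhds_conv_at by (auto intro: topological_tendstoD)
  with branch have "\<forall>\<^sub>F \<epsilon> in nhds \<epsilon>0. of_real \<epsilon> \<in> T \<and> \<mu> (of_real \<epsilon>) = lam \<epsilon>"
    by eventually_elim blast
  then obtain \<delta> where "\<delta> > 0" and near: "\<And>\<epsilon>. \<epsilon> \<in> ball \<epsilon>0 \<delta> \<Longrightarrow> of_real \<epsilon> \<in> T \<and> \<mu> (of_real \<epsilon>) = lam \<epsilon>"
    unfolding eventually_nhds_metric by (auto simp: dist_commute)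
  show ?thesis
  proof
    show "\<delta> > 0" by fact
    fix k assume "k < n"
    have "(\<lambda>z. cofactor (M z) j k) holomorphic_on T"
      using cofactor_holomorphic_on[OF M M_holo] by (rule holomorphic_on_subset) (auto simp: T_def)
    moreover have "col (adj_mat (M z)) j $ k = cofactor (M z) j k" for z
      using j(1) \<open>k < n\<close> by (simp add: adj_mat_def carrier_matD[OF M])
    ultimately show "has_holomorphic_extension (ball \<epsilon>0 \<delta>) (\<lambda>\<epsilon>. col (adj_mat (M (of_real \<epsilon>))) j $ k)"
      using \<open>open T\<close> near by (intro has_holomorphic_extensionI[of T _ "\<lambda>z. cofactor (M z) j k"]) auto
  next
    fix \<epsilon> u assume "\<epsilon> \<in> ball \<epsilon>0 \<delta>" "eigenvector (C0 + of_real \<epsilon> \<cdot>\<^sub>m C1) u (lam \<epsilon>)"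
    then have u: "eigenvector (A (of_real \<epsilon>)) u (lam \<epsilon>)"
      and "of_real \<epsilon> \<in> T" and M_eq: "M (of_real \<epsilon>) = - char_matrix (A (of_real \<epsilon>)) (lam \<epsilon>)"
      using near by (auto simp: M_def A_def)
    then have "det (M (of_real \<epsilon>)) = 0" "cofactor (M (of_real \<epsilon>)) j j \<noteq> 0"
      using root[of "of_real \<epsilon>"] char_poly_matrix[OF A] by (auto simp: T_def M_def)
    moreover have "u \<in> carrier_vec n" "M (of_real \<epsilon>) *\<^sub>v u = 0\<^sub>v n"
      using u unfolding M_eq eigenvector_char_matrix[OF A]
      by (auto simp: carrier_matD[OF char_matrix_closed[OF A]])
    ultimately show "\<exists>c. u = c \<cdot>\<^sub>v col (adj_mat (M (of_real \<epsilon>))) j"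
      using kernel_subset_span_adj_mat_col[OF M _ j(1)] by blast
  qed
qed

section \<open>Matrix pencils indexed by \<open>{1..N}\<close>\<close>

definition mat_of_fun :: "nat \<Rightarrow> (nat \<Rightarrow> nat \<Rightarrow> complex) \<Rightarrow> complex mat" where
  "mat_of_fun N Q = mat N N (\<lambda>(i, j). Q (Suc i) (Suc j))"

definition vec_of_fun :: "nat \<Rightarrow> (nat \<Rightarrow> complex) \<Rightarrow> complex vec" where
  "vec_of_fun N w = vec N (\<lambda>i. w (Suc i))"

lemma mat_of_fun_dim [simp]: "dim_row (mat_of_fun N Q) = N" "dim_col (mat_of_fun N Q) = N"
  by (simp_all add: mat_of_fun_def)

lemma dim_vec_of_fun [simp]: "dim_vec (vec_of_fun N w) = N"
  by (simp add: vec_of_fun_def)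

lemma vec_of_fun_index [simp]: "i < N \<Longrightarrow> vec_of_fun N w $ i = w (Suc i)"
  by (simp add: vec_of_fun_def)

lemma ball_atLeast1_atMost_iff: "(\<forall>j\<in>{1..N}. P j) \<longleftrightarrow> (\<forall>i<N. P (Suc i))"
  unfolding image_Suc_lessThan[symmetric] by auto

lemma mat_of_fun_mult_vec_of_fun:
  "i < N \<Longrightarrow> (mat_of_fun N Q *\<^sub>v vec_of_fun N w) $ i = (\<Sum>j\<in>{1..N}. Q (Suc i) j * w j)"
  by (simp add: mat_of_fun_def vec_of_fun_def scalar_prod_def row_def atLeast0LessThan sum.atLeast1_atMost_eq)

lemma vec_of_fun_shift: "v \<in> carrier_vec N \<Longrightarrow> vec_of_fun N (\<lambda>j. v $ (j - 1)) = v"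
  by (intro eq_vecI) auto

lemma is_eigvec_iff_eigenvector:
  "is_eigvec {1..N} Q \<mu> w \<longleftrightarrow> eigenvector (mat_of_fun N Q) (vec_of_fun N w) \<mu>"
proof -
  have "vec_of_fun N w = 0\<^sub>v N \<longleftrightarrow> (\<forall>i<N. w (Suc i) = 0)"
    by (simp add: vec_eq_iff)
  then have nonzero: "vec_of_fun N w \<noteq> 0\<^sub>v N \<longleftrightarrow> (\<exists>j\<in>{1..N}. w j \<noteq> 0)"
    using ball_atLeast1_atMost_iff[where P = "\<lambda>j. w j = 0"] by blast
  have eigen_eq: "mat_of_fun N Q *\<^sub>v vec_of_fun N w = \<mu> \<cdot>\<^sub>v vec_of_fun N w \<longleftrightarrow>
      (\<forall>i<N. (\<Sum>j\<in>{1..N}. Q (Suc i) j * w j) = \<mu> * w (Suc i))"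
  proof -
    have "mat_of_fun N Q *\<^sub>v vec_of_fun N w = \<mu> \<cdot>\<^sub>v vec_of_fun N w \<longleftrightarrow>
        (\<forall>i<N. (mat_of_fun N Q *\<^sub>v vec_of_fun N w) $ i = (\<mu> \<cdot>\<^sub>v vec_of_fun N w) $ i)"
      unfolding vec_eq_iff by simp
    also have "\<dots> \<longleftrightarrow> (\<forall>i<N. (\<Sum>j\<in>{1..N}. Q (Suc i) j * w j) = \<mu> * w (Suc i))"
      using mat_of_fun_mult_vec_of_fun by simp
    finally show ?thesis .
  qed
  have carrier: "vec_of_fun N w \<in> carrier_vec N"
    by (rule carrier_vecI) simp
  have shift: "(\<forall>i\<in>{1..N}. (\<Sum>j\<in>{1..N}. Q i j * w j) = \<mu> * w i) \<longleftrightarrow>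
      (\<forall>i<N. (\<Sum>j\<in>{1..N}. Q (Suc i) j * w j) = \<mu> * w (Suc i))"
    by (rule ball_atLeast1_atMost_iff[where P = "\<lambda>i. (\<Sum>j\<in>{1..N}. Q i j * w j) = \<mu> * w i"])
  have "is_eigvec {1..N} Q \<mu> w \<longleftrightarrow>
      (\<exists>j\<in>{1..N}. w j \<noteq> 0) \<and> (\<forall>i\<in>{1..N}. (\<Sum>j\<in>{1..N}. Q i j * w j) = \<mu> * w i)"
    by (simp only: is_eigvec_def)
  also have "\<dots> \<longleftrightarrow> vec_of_fun N w \<noteq> 0\<^sub>v N \<and> mat_of_fun N Q *\<^sub>v vec_of_fun N w = \<mu> \<cdot>\<^sub>v vec_of_fun N w"
    by (simp only: nonzero shift eigen_eq)
  also have "\<dots> \<longleftrightarrow> eigenvector (mat_of_fun N Q) (vec_of_fun N w) \<mu>"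
    using carrier by (simp only: eigenvector_def mat_of_fun_dim simp_thms)
  finally show ?thesis .
qed

lemma eigenvalues_on_eq_eigenvalues:
  "eigenvalues_on {1..N} Q = {\<mu>. eigenvalue (mat_of_fun N Q) \<mu>}"
proof (rule equalityI; rule subsetI)
  fix \<mu> assume "\<mu> \<in> eigenvalues_on {1..N} Q"
  then obtain w where "is_eigvec {1..N} Q \<mu> w" by (auto simp: eigenvalues_on_def)
  then have "eigenvector (mat_of_fun N Q) (vec_of_fun N w) \<mu>"
    by (rule is_eigvec_iff_eigenvector[THEN iffD1])
  then show "\<mu> \<in> {\<mu>. eigenvalue (mat_of_fun N Q) \<mu>}" by (auto simp: eigenvalue_def)
next
  fix \<mu> assume "\<mu> \<in> {\<mu>. eigenvalue (mat_of_fun N Q) \<mu>}"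
  then obtain v where v: "eigenvector (mat_of_fun N Q) v \<mu>" by (auto simp: eigenvalue_def)
  then have "v \<in> carrier_vec N" by (simp add: eigenvector_def)
  then have shift: "vec_of_fun N (\<lambda>j. v $ (j - 1)) = v" by (rule vec_of_fun_shift)
  have "is_eigvec {1..N} Q \<mu> (\<lambda>j. v $ (j - 1))"
    unfolding is_eigvec_iff_eigenvector shift by (rule v)
  then show "\<mu> \<in> eigenvalues_on {1..N} Q" by (auto simp: eigenvalues_on_def)
qed

lemma mat_of_fun_pencil:
  "mat_of_fun N (\<lambda>i j. C i j + of_real \<epsilon> * D i j) = mat_of_fun N C + of_real \<epsilon> \<cdot>\<^sub>m mat_of_fun N D"
  by (intro eq_matI) (auto simp: mat_of_fun_def)

lemma pencil_local_eigenvector_frame: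
  fixes C D :: "nat \<Rightarrow> nat \<Rightarrow> complex" and lam :: "real \<Rightarrow> complex"
  defines "A \<equiv> \<lambda>\<epsilon> i j. C i j + of_real \<epsilon> * D i j"
  assumes J: "open J" "\<epsilon>0 \<in> J" and lam: "continuous_on J lam"
    and distinct: "\<And>\<epsilon>. \<epsilon> \<in> J \<Longrightarrow> card (eigenvalues_on {1..N} (A \<epsilon>)) = N"
    and eigvec: "\<And>\<epsilon>. \<epsilon> \<in> J \<Longrightarrow> is_eigvec {1..N} (A \<epsilon>) (lam \<epsilon>) (U \<epsilon>)"
  obtains \<delta> V where "\<delta> > 0" "ball \<epsilon>0 \<delta> \<subseteq> J"
    "\<And>k. k \<in> {1..N} \<Longrightarrow> has_holomorphic_extension (ball \<epsilon>0 \<delta>) (\<lambda>\<epsilon>. V \<epsilon> k)"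
    "\<And>\<epsilon>. \<epsilon> \<in> ball \<epsilon>0 \<delta> \<Longrightarrow> \<exists>c. c \<noteq> 0 \<and> (\<forall>k\<in>{1..N}. U \<epsilon> k = c * V \<epsilon> k)"
proof -
  define C0 where "C0 = mat_of_fun N C"
  define C1 where "C1 = mat_of_fun N D"
  have carrier: "C0 \<in> carrier_mat N N" "C1 \<in> carrier_mat N N"
    unfolding C0_def C1_def by (auto intro: carrier_matI)
  have A_mat: "mat_of_fun N (A \<epsilon>) = C0 + of_real \<epsilon> \<cdot>\<^sub>m C1" for \<epsilon>
    unfolding A_def C0_def C1_def by (rule mat_of_fun_pencil)
  have eigenvector: "eigenvector (C0 + of_real \<epsilon> \<cdot>\<^sub>m C1) (vec_of_fun N (U \<epsilon>)) (lam \<epsilon>)" if "\<epsilon> \<in> J" for \<epsilon>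
    using is_eigvec_iff_eigenvector[THEN iffD1, OF eigvec[OF that]] by (simp only: A_mat)
  have eig: "\<forall>\<^sub>F \<epsilon> in nhds \<epsilon>0. eigenvalue (C0 + of_real \<epsilon> \<cdot>\<^sub>m C1) (lam \<epsilon>)"
    using eventually_nhds_in_open[OF J]
  proof eventually_elim
    case (elim \<epsilon>)
    then show ?case using eigenvector unfolding eigenvalue_def by blast
  qed
  have card: "card {\<mu>. eigenvalue (C0 + of_real \<epsilon>0 \<cdot>\<^sub>m C1) \<mu>} = N"
    using distinct[OF J(2)] unfolding eigenvalues_on_eq_eigenvalues A_mat .
  have "C0 + of_real \<epsilon>0 \<cdot>\<^sub>m C1 \<in> carrier_mat N N" using carrier by simp
  moreover have "eigenvalue (C0 + of_real \<epsilon>0 \<cdot>\<^sub>m C1) (lam \<epsilon>0)"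
    using eigenvector[OF J(2)] unfolding eigenvalue_def by blast
  ultimately have simple: "poly (pderiv (char_poly (C0 + of_real \<epsilon>0 \<cdot>\<^sub>m C1))) (lam \<epsilon>0) \<noteq> 0"
    using card pderiv_char_poly_nonzero_if_distinct_eigenvalues by blast
  have cont: "isCont lam \<epsilon>0" using J lam by (simp add: continuous_on_eq_continuous_at)
  obtain \<delta> and v :: "real \<Rightarrow> complex vec" where "\<delta> > 0"
    and v_holo: "\<And>k. k < N \<Longrightarrow> has_holomorphic_extension (ball \<epsilon>0 \<delta>) (\<lambda>\<epsilon>. v \<epsilon> $ k)"
    and v_span: "\<And>\<epsilon> u. \<epsilon> \<in> ball \<epsilon>0 \<delta> \<Longrightarrow> eigenvector (C0 + of_real \<epsilon> \<cdot>\<^sub>m C1) u (lam \<epsilon>) \<Longrightarrow> \<exists>c. u = c \<cdot>\<^sub>v v \<epsilon>"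
    using simple_eigenvalue_local_eigenvector[OF carrier cont eig simple] by blast
  obtain e where "e > 0" "ball \<epsilon>0 e \<subseteq> J" using J open_contains_ball by blast
  show ?thesis
  proof
    show "min \<delta> e > 0" "ball \<epsilon>0 (min \<delta> e) \<subseteq> J" using \<open>\<delta> > 0\<close> \<open>e > 0\<close> \<open>ball \<epsilon>0 e \<subseteq> J\<close> by auto
    fix k :: nat assume "k \<in> {1..N}"
    then show "has_holomorphic_extension (ball \<epsilon>0 (min \<delta> e)) (\<lambda>\<epsilon>. v \<epsilon> $ (k - 1))"
      by (intro has_holomorphic_extension_subset[OF v_holo]) auto
  next
    fix \<epsilon> assume \<epsilon>: "\<epsilon> \<in> ball \<epsilon>0 (min \<delta> e)"
    then have "\<epsilon> \<in> J" "\<epsilon> \<in> ball \<epsilon>0 \<delta>" using \<open>ball \<epsilon>0 e \<subseteq> J\<close> by auto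
    then obtain c where c: "vec_of_fun N (U \<epsilon>) = c \<cdot>\<^sub>v v \<epsilon>"
      using v_span[OF \<open>\<epsilon> \<in> ball \<epsilon>0 \<delta>\<close> eigenvector[OF \<open>\<epsilon> \<in> J\<close>]] by blast
    have dim: "dim_vec (v \<epsilon>) = N" using arg_cong[OF c, of dim_vec] by (simp add: vec_of_fun_def)
    have U_eq: "U \<epsilon> k = c * v \<epsilon> $ (k - 1)" if "k \<in> {1..N}" for k
    proof -
      obtain i where i: "k = Suc i" "i < N" using \<open>k \<in> {1..N}\<close> by (cases k) auto
      then have "U \<epsilon> k = vec_of_fun N (U \<epsilon>) $ i" by (simp add: vec_of_fun_def)
      also have "\<dots> = c * v \<epsilon> $ i" unfolding c using i(2) dim by simp
      finally show ?thesis using i(1) by simp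
    qed
    moreover have "c \<noteq> 0"
    proof
      assume "c = 0"
      then have "\<forall>k\<in>{1..N}. U \<epsilon> k = 0" using U_eq by simp
      then show False using eigvec[OF \<open>\<epsilon> \<in> J\<close>] unfolding is_eigvec_def by blast
    qed
    ultimately show "\<exists>c. c \<noteq> 0 \<and> (\<forall>k\<in>{1..N}. U \<epsilon> k = c * v \<epsilon> $ (k - 1))" by blast
  qed
qed

lemma smooth_on_aligned_eigenvector:
  fixes C D :: "nat \<Rightarrow> nat \<Rightarrow> complex" and lam :: "real \<Rightarrow> complex"
  defines "A \<equiv> \<lambda>\<epsilon> i j. C i j + of_real \<epsilon> * D i j"
  assumes "open J" "continuous_on J lam"
    and "\<And>\<epsilon>. \<epsilon> \<in> J \<Longrightarrow> card (eigenvalues_on {1..N} (A \<epsilon>)) = N"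
    and "\<And>\<epsilon>. \<epsilon> \<in> J \<Longrightarrow> is_eigvec {1..N} (A \<epsilon>) (lam \<epsilon>) (U \<epsilon>)"
    and nonzero: "\<And>\<epsilon>. \<epsilon> \<in> J \<Longrightarrow> vinner {1..N} (U \<epsilon>) w \<noteq> 0"
    and "j \<in> {1..N}"
  shows "smooth_on J (\<lambda>\<epsilon>. aligned_unit {1..N} w (U \<epsilon>) j)"
proof (rule smooth_on_if_has_holomorphic_extension)
  fix \<epsilon>0 assume "\<epsilon>0 \<in> J"
  obtain \<delta> V where "\<delta> > 0" "ball \<epsilon>0 \<delta> \<subseteq> J"
    and V_holo: "\<And>k. k \<in> {1..N} \<Longrightarrow> has_holomorphic_extension (ball \<epsilon>0 \<delta>) (\<lambda>\<epsilon>. V \<epsilon> k)"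
    and U_V: "\<And>\<epsilon>. \<epsilon> \<in> ball \<epsilon>0 \<delta> \<Longrightarrow> \<exists>c. c \<noteq> 0 \<and> (\<forall>k\<in>{1..N}. U \<epsilon> k = c * V \<epsilon> k)"
    using pencil_local_eigenvector_frame[OF assms(2) \<open>\<epsilon>0 \<in> J\<close> assms(3)
        assms(4)[unfolded A_def] assms(5)[unfolded A_def]] by blast
  have same: "aligned_unit {1..N} w (V \<epsilon>) j = aligned_unit {1..N} w (U \<epsilon>) j"
    and nonzero_V: "vinner {1..N} (V \<epsilon>) w \<noteq> 0"
    if \<epsilon>: "\<epsilon> \<in> ball \<epsilon>0 \<delta>" for \<epsilon>
  proof -
    obtain c where "c \<noteq> 0" "\<And>k. k \<in> {1..N} \<Longrightarrow> U \<epsilon> k = c * V \<epsilon> k" using U_V[OF \<epsilon>] by blast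
    moreover from this have "vinner {1..N} (U \<epsilon>) w = c * vinner {1..N} (V \<epsilon>) w"
      by (simp add: vinner_def sum_distrib_left mult.assoc)
    moreover have "vinner {1..N} (U \<epsilon>) w \<noteq> 0"
      using nonzero \<epsilon> \<open>ball \<epsilon>0 \<delta> \<subseteq> J\<close> by blast
    ultimately show "aligned_unit {1..N} w (V \<epsilon>) j = aligned_unit {1..N} w (U \<epsilon>) j"
      and "vinner {1..N} (V \<epsilon>) w \<noteq> 0"
      using aligned_unit_scale[of c "{1..N}" "U \<epsilon>" "V \<epsilon>" j w] \<open>j \<in> {1..N}\<close> by auto
  qed
  have "has_holomorphic_extension (ball \<epsilon>0 \<delta>) (\<lambda>\<epsilon>. aligned_unit {1..N} w (V \<epsilon>) j)"
    by (rule has_holomorphic_extension_aligned_unit[OF V_holo nonzero_V \<open>j \<in> {1..N}\<close>])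
  then have "has_holomorphic_extension (ball \<epsilon>0 \<delta>) (\<lambda>\<epsilon>. aligned_unit {1..N} w (U \<epsilon>) j)"
    by (rule has_holomorphic_extension_cong) (rule same)
  then show "\<exists>\<delta>>0. has_holomorphic_extension (ball \<epsilon>0 \<delta>) (\<lambda>\<epsilon>. aligned_unit {1..N} w (U \<epsilon>) j)"
    using \<open>\<delta> > 0\<close> by blast
qed

lemma mat_mult_Weps:
  "mat_mult I D (Weps Wd \<epsilon>) = (\<lambda>i j. mat_mult I D (\<lambda>i j. if i = j then 1 else 0) i j +
      of_real \<epsilon> * mat_mult I D (\<lambda>i j. complex_of_real (Wd i j)) i j)"
  unfolding mat_mult_def Weps_def
  by (simp add: fun_eq_iff distrib_left sum.distrib sum_distrib_left mult.left_commute)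

lemma vnorm_eq_1_if_vinner_self:
  assumes "vinner I u u = 1"
  shows "vnorm I u = 1"
proof -
  have "(vnorm I u)\<^sup>2 = 1" using assms by (metis vinner_self of_real_eq_1_iff)
  then show ?thesis using vnorm_nonneg[of I u] by (auto simp: power2_eq_1_iff)
qed

lemma eventually_vinner_nonzero:
  assumes "finite L" and "\<And>l. l \<in> L \<Longrightarrow> \<forall>\<^sub>F x in F. vnorm I (u l x) = 1"
    and "\<And>l. l \<in> L \<Longrightarrow> vnorm I (w l) = 1"
    and "\<And>l. l \<in> L \<Longrightarrow> ((\<lambda>x. INF \<theta>::real. vnorm I (\<lambda>j. u l x j - cis \<theta> * w l j)) \<longlongrightarrow> 0) F"
  shows "\<forall>\<^sub>F x in F. \<forall>l\<in>L. vinner I (u l x) (w l) \<noteq> 0"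
proof (rule eventually_ball_finite[OF assms(1)], rule ballI)
  fix l assume "l \<in> L"
  from tendsto_norm_vinner_one[OF assms(2-4)[OF this]]
  have "\<forall>\<^sub>F x in F. 0 < cmod (vinner I (u l x) (w l))" by (rule order_tendstoD(1)) simp
  then show "\<forall>\<^sub>F x in F. vinner I (u l x) (w l) \<noteq> 0" by eventually_elim auto
qed

theorem proposition4p6:
  fixes S N k :: nat and L :: "nat \<Rightarrow> nat" and Wd :: "nat \<Rightarrow> nat \<Rightarrow> real"
    and \<beta> :: "nat \<Rightarrow> real" and \<gamma>0 :: real
    and lam :: "nat \<Rightarrow> real \<Rightarrow> complex" and f :: "nat \<Rightarrow> nat \<Rightarrow> complex"
  defines "P \<equiv> \<lambda>\<epsilon>. mat_mult {1..N} (Dmat k \<beta> S L) (Weps Wd \<epsilon>)"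
    and "Phat \<equiv> mat_mult {1..N} (Dmat k \<beta> S L) (What S L Wd)"
  assumes "1 < S" and "S \<le> N"
    and "band_width S L N"
    and "admissible S L N Wd"
    and "\<beta> \<in> Gamma_set S"
    and "\<gamma>0 > 0"
    and "\<forall>\<epsilon>\<in>{0<..<\<gamma>0}. inj_on (\<lambda>l. lam l \<epsilon>) {1..N} \<and>
           eigenvalues_on {1..N} (P \<epsilon>) = (\<lambda>l. lam l \<epsilon>) ` {1..N}"
    and "\<forall>l\<in>{1..N}. continuous_on {0<..<\<gamma>0} (lam l)"
    and "\<forall>s\<in>{1..S}. \<forall>l\<in>blk L s. (lam l \<longlongrightarrow> phase k \<beta> s) (at_right 0)"
    and "\<forall>l\<in>{1..N}. \<exists>\<mu>. is_eigvec {1..N} Phat \<mu> (f l)"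
    and "\<forall>l\<in>{1..N}. \<forall>m\<in>{1..N}. vinner {1..N} (f l) (f m) = (if l = m then 1 else 0)"
    and "\<forall>l\<in>{1..N}. \<forall>g :: real \<Rightarrow> nat \<Rightarrow> complex.
           (\<forall>\<epsilon>\<in>{0<..<\<gamma>0}. is_eigvec {1..N} (P \<epsilon>) (lam l \<epsilon>) (g \<epsilon>) \<and> vnorm {1..N} (g \<epsilon>) = 1)
           \<longrightarrow> ((\<lambda>\<epsilon>. INF \<theta>::real. vnorm {1..N} (\<lambda>j. g \<epsilon> j - cis \<theta> * f l j)) \<longlongrightarrow> 0) (at_right 0)"
  shows "\<exists>\<gamma>>0. \<exists>F :: nat \<Rightarrow> real \<Rightarrow> nat \<Rightarrow> complex.
           (\<forall>\<epsilon>\<in>{0<..<\<gamma>}. \<forall>l\<in>{1..N}. vnorm {1..N} (F l \<epsilon>) = 1 \<and>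
               (\<forall>i\<in>{1..N}. (\<Sum>j\<in>{1..N}. P \<epsilon> i j * F l \<epsilon> j) = lam l \<epsilon> * F l \<epsilon> i)) \<and>
           (\<forall>l\<in>{1..N}. (\<forall>j\<in>{1..N}. smooth_on {0<..<\<gamma>} (\<lambda>\<epsilon>. F l \<epsilon> j)) \<and>
               ((\<lambda>\<epsilon>. vnorm {1..N} (\<lambda>j. F l \<epsilon> j - f l j)) \<longlongrightarrow> 0) (at_right 0))"
proof -
  let ?I = "{1..N}"
  define A0 where "A0 = mat_mult ?I (Dmat k \<beta> S L) (\<lambda>i j. if i = j then 1 else 0)"
  define A1 where "A1 = mat_mult ?I (Dmat k \<beta> S L) (\<lambda>i j. complex_of_real (Wd i j))"
  have P_eq: "P \<epsilon> = (\<lambda>i j. A0 i j + of_real \<epsilon> * A1 i j)" for \<epsilon>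
    unfolding P_def A0_def A1_def by (rule mat_mult_Weps)
  define U where "U l \<epsilon> = (SOME u. is_eigvec ?I (P \<epsilon>) (lam l \<epsilon>) u \<and> vnorm ?I u = 1)" for l \<epsilon>
  have U: "is_eigvec ?I (P \<epsilon>) (lam l \<epsilon>) (U l \<epsilon>) \<and> vnorm ?I (U l \<epsilon>) = 1"
    if "\<epsilon> \<in> {0<..<\<gamma>0}" "l \<in> ?I" for \<epsilon> l
    unfolding U_def using assms(9) that by (intro someI_ex[OF exists_unit_eigvec]) auto
  have U_unit: "\<forall>\<^sub>F \<epsilon> in at_right 0. vnorm ?I (U l \<epsilon>) = 1" if "l \<in> ?I" for l
    unfolding eventually_at_right_field using U that \<open>\<gamma>0 > 0\<close> by (intro exI[of _ \<gamma>0]) auto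
  have f_unit: "vnorm ?I (f l) = 1" if "l \<in> ?I" for l
    using assms(13) that by (simp add: vnorm_eq_1_if_vinner_self)
  have phase_dist: "((\<lambda>\<epsilon>. INF \<theta>::real. vnorm ?I (\<lambda>j. U l \<epsilon> j - cis \<theta> * f l j)) \<longlongrightarrow> 0) (at_right 0)"
    if "l \<in> ?I" for l
    by (rule assms(14)[rule_format, OF that]) (use U that in blast)
  have "\<forall>\<^sub>F \<epsilon> in at_right 0. \<forall>l\<in>?I. vinner ?I (U l \<epsilon>) (f l) \<noteq> 0"
    by (rule eventually_vinner_nonzero[OF _ U_unit f_unit phase_dist]) simp_all
  then obtain \<gamma>1 where "\<gamma>1 > 0" and nonzero: "\<forall>\<epsilon>>0. \<epsilon> < \<gamma>1 \<longrightarrow> (\<forall>l\<in>?I. vinner ?I (U l \<epsilon>) (f l) \<noteq> 0)"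
    unfolding eventually_at_right_field by blast
  define \<gamma> where "\<gamma> = min \<gamma>0 \<gamma>1"
  have eig: "is_eigvec ?I (\<lambda>i j. A0 i j + of_real \<epsilon> * A1 i j) (lam l \<epsilon>) (U l \<epsilon>)"
    and card: "card (eigenvalues_on ?I (\<lambda>i j. A0 i j + of_real \<epsilon> * A1 i j)) = N"
    and aligned: "vinner ?I (U l \<epsilon>) (f l) \<noteq> 0"
    if "\<epsilon> \<in> {0<..<\<gamma>}" "l \<in> ?I" for \<epsilon> l
    using U[of \<epsilon> l] assms(9) nonzero that card_image[of "\<lambda>l. lam l \<epsilon>" ?I]
    unfolding P_eq by (auto simp: \<gamma>_def)
  show ?thesis
  proof (intro exI[of _ \<gamma>] exI[of _ "\<lambda>l \<epsilon>. aligned_unit ?I (f l) (U l \<epsilon>)"] conjI ballI)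
    show "\<gamma> > 0" using \<open>\<gamma>0 > 0\<close> \<open>\<gamma>1 > 0\<close> by (simp add: \<gamma>_def)
  next
    fix \<epsilon> l i assume "\<epsilon> \<in> {0<..<\<gamma>}" "l \<in> ?I"
    show "vnorm ?I (aligned_unit ?I (f l) (U l \<epsilon>)) = 1"
      by (rule vnorm_aligned_unit[OF aligned]) fact+
    assume "i \<in> ?I"
    with is_eigvec_aligned_unit[OF eig aligned] \<open>\<epsilon> \<in> {0<..<\<gamma>}\<close> \<open>l \<in> ?I\<close>
    show "(\<Sum>j\<in>?I. P \<epsilon> i j * aligned_unit ?I (f l) (U l \<epsilon>) j) = lam l \<epsilon> * aligned_unit ?I (f l) (U l \<epsilon>) i"
      unfolding is_eigvec_def P_eq by blast
  next
    fix l j assume "l \<in> ?I" "j \<in> ?I"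
    moreover have "continuous_on {0<..<\<gamma>} (lam l)"
      by (rule continuous_on_subset[OF assms(10)[rule_format, OF \<open>l \<in> ?I\<close>]]) (auto simp: \<gamma>_def)
    ultimately show "smooth_on {0<..<\<gamma>} (\<lambda>\<epsilon>. aligned_unit ?I (f l) (U l \<epsilon>) j)"
      using eig card aligned by (intro smooth_on_aligned_eigenvector[where C = A0 and D = A1]) auto
  next
    fix l assume "l \<in> ?I"
    then show "((\<lambda>\<epsilon>. vnorm ?I (\<lambda>j. aligned_unit ?I (f l) (U l \<epsilon>) j - f l j)) \<longlongrightarrow> 0) (at_right 0)"
      using tendsto_aligned_unit[OF U_unit f_unit phase_dist] by blast
  qed
qed

end
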